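(* Let $G$ be a finite set with $n=\#G\ge 1$ elements and let $s:G\to G$ be a translation on $G$. Then there exists a quasigroup operation $*$ on $G$ for which $s$ is an automorphism (i.e. $s(x*y)=s(x)*s(y)$ for all $x,y\in G$) if and only if $n$ is odd.
   Context: A binary operation $*$ on a set $G$ is a quasigroup operation if it is left and right cancelable: $x*y=x*z\Rightarrow y=z$ and $y*x=z*x\Rightarrow y=z$ for all $x,y,z\in G$. For a finite set $G$, a map $s:G\to G$ is called a translation on $G$ if for every $x\in G$ one has $G=\{s^k(x): k=0,1,\ldots,\#G-1\}$ (equivalently, $s$ is a cyclic permutation of $G$ of length $\#G$). *)

theory Defs
  imports Main
begin

definition quasigroup_op :: "'a set \<Rightarrow> ('a \<Rightarrow> 'a \<Rightarrow> 'a) \<Rightarrow> bool" where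
  "quasigroup_op G f \<longleftrightarrow>
     (\<forall>x\<in>G. \<forall>y\<in>G. f x y \<in> G) \<and>
     (\<forall>x\<in>G. \<forall>y\<in>G. \<forall>z\<in>G. f x y = f x z \<longrightarrow> y = z) \<and>
     (\<forall>x\<in>G. \<forall>y\<in>G. \<forall>z\<in>G. f y x = f z x \<longrightarrow> y = z)"

definition translation :: "'a set \<Rightarrow> ('a \<Rightarrow> 'a) \<Rightarrow> bool" where
  "translation G s \<longleftrightarrow>
     (\<forall>x\<in>G. s x \<in> G) \<and>
     (\<forall>x\<in>G. G = {(s ^^ k) x | k. k < card G})"

end

theory Submission
  imports Defs
begin

(* Proof idea.  A translation s makes G a cyclic orbit: fixing x0 in G, the map
   k |-> s^k x0 identifies Z/n with G (n = card G), and s becomes "add 1".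

   If n is odd, 2 is invertible mod n with inverse h = (n+1)/2, and the "mean"
   x * y = h (x + y) is a quasigroup operation that commutes with adding 1.

   Conversely, let * be a quasigroup operation with automorphism s, and write
   x0 * s^d x0 = s^(c d) x0.  Left cancellation makes c a permutation of Z/n, and
   applying s^(-d) shows s^(-d) x0 * x0 = s^(c d - d) x0, so right cancellation makes
   d |-> c d - d a permutation as well (c is an orthomorphism of Z/n).  Summing,
   sum_d d = sum_d (c d - d) = sum_d c d - sum_d d = 0 mod n, whereas for even n
   the sum 0 + 1 + ... + (n-1) is n/2 mod n. *)

lemma sum_permutation_lessThan:
  fixes g :: "nat \<Rightarrow> nat"
  assumes "inj_on g {..<n}" and "g ` {..<n} \<subseteq> {..<n}"
  shows "(\<Sum>d<n. g d) = (\<Sum>d<n. d)"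
proof -
  have "g ` {..<n} = {..<n}" using assms by (intro endo_inj_surj) auto
  then show ?thesis using sum.reindex[OF assms(1), of id] by simp
qed

lemma sum_lessThan_mod_even:
  fixes n :: nat
  assumes "even n"
  shows "(\<Sum>d<n. d) mod n = n div 2"
proof -
  obtain m where n: "n = 2 * m" using assms by blast
  have "(\<Sum>d<n. d) = n * (n - 1) div 2"
    using Sum_Ico_nat[of 0 n] by (simp add: lessThan_atLeast0)
  also have "\<dots> = n * (m - 1) + m"
    using n by (cases m) (auto simp: algebra_simps)
  finally have sum_eq: "(\<Sum>d<n. d) = n * (m - 1) + m" .
  show ?thesis
  proof (cases "m = 0")
    case False
    then have "m < n" using n by simp
    then show ?thesis unfolding sum_eq using n by simp
  qed (use n in simp)
qed

lemma orthomorphism_odd: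
  fixes c :: "nat \<Rightarrow> nat"
  assumes "0 < n"
    and c_inj: "inj_on c {..<n}" and c_range: "c ` {..<n} \<subseteq> {..<n}"
    and diff_inj: "inj_on (\<lambda>d. (n - d + c d) mod n) {..<n}"
  shows "odd n"
proof (rule ccontr)
  assume "\<not> odd n"
  have "(\<Sum>d<n. n - d + c d) + (\<Sum>d<n. d) = (\<Sum>d<n. n + c d)"
    by (simp add: sum.distrib[symmetric])
  also have "\<dots> = n * n + (\<Sum>d<n. d)"
    using sum_permutation_lessThan[OF c_inj c_range] by (simp add: sum.distrib)
  finally have "(\<Sum>d<n. n - d + c d) = n * n" by simp
  moreover have "(\<Sum>d<n. (n - d + c d) mod n) = (\<Sum>d<n. d)"
    using \<open>0 < n\<close> by (intro sum_permutation_lessThan[OF diff_inj]) auto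
  ultimately have "(\<Sum>d<n. d) mod n = 0"
    by (metis mod_sum_eq mod_mult_self1_is_0)
  with sum_lessThan_mod_even \<open>\<not> odd n\<close> \<open>0 < n\<close> show False by fastforce
qed

lemma funpow_automorphism:
  assumes "\<forall>x\<in>G. s x \<in> G" and "\<forall>x\<in>G. \<forall>y\<in>G. f x y \<in> G"
    and "\<forall>x\<in>G. \<forall>y\<in>G. s (f x y) = f (s x) (s y)"
    and "x \<in> G" and "y \<in> G"
  shows "(s ^^ k) (f x y) = f ((s ^^ k) x) ((s ^^ k) y)"
proof -
  have "(s ^^ k) x \<in> G \<and> (s ^^ k) y \<in> G \<and> (s ^^ k) (f x y) = f ((s ^^ k) x) ((s ^^ k) y)"
    by (induction k) (use assms in auto)
  then show ?thesis by simp
qed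

(* For odd n, multiplication by (n+1)/2, the inverse of 2, is injective modulo n. *)
lemma half_mod_cancel:
  fixes n a b :: nat
  assumes "odd n" and "((n + 1) div 2 * a) mod n = ((n + 1) div 2 * b) mod n"
  shows "a mod n = b mod n"
proof -
  define h where "h = (n + 1) div 2"
  have two_h: "2 * h = n + 1" using assms(1) by (simp add: h_def)
  have "(2 * (h * a)) mod n = (2 * (h * b)) mod n"
    using assms(2) by (metis h_def mod_mult_right_eq)
  then have "((n + 1) * a) mod n = ((n + 1) * b) mod n"
    by (simp only: mult.assoc[symmetric] two_h)
  then show ?thesis by (simp add: algebra_simps)
qed

(* A translation s on G together with a base point x0; orbit k = s^k x0 identifies
   Z/n with G, and index is the inverse identification. *)
locale translation_orbit =
  fixes G :: "'a set" and s :: "'a \<Rightarrow> 'a" and x0 :: 'a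
  assumes finite_G: "finite G" and translation: "translation G s" and x0_in: "x0 \<in> G"
begin

abbreviation n :: nat where "n \<equiv> card G"

definition orbit :: "nat \<Rightarrow> 'a" where "orbit k = (s ^^ k) x0"

lemma s_in: "x \<in> G \<Longrightarrow> s x \<in> G"
  using translation unfolding translation_def by blast

lemma orbit_in: "orbit k \<in> G"
  by (induction k) (auto simp: orbit_def x0_in s_in)

lemma orbit_Suc: "orbit (Suc k) = s (orbit k)"
  by (simp add: orbit_def)

lemma funpow_orbit: "(s ^^ j) (orbit k) = orbit (j + k)"
  by (simp add: orbit_def funpow_add)

lemma card_pos: "0 < n"
  using finite_G x0_in card_gt_0_iff by blast

lemma G_eq_orbit: "G = orbit ` {..<n}"
  using translation x0_in unfolding translation_def orbit_def by blast

lemma inj_orbit: "inj_on orbit {..<n}"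
  using G_eq_orbit by (simp add: eq_card_imp_inj_on)

(* The orbit closes up after exactly n steps: read the translation property at s x0
   and use injectivity of the orbit on {..<n}. *)
lemma orbit_period: "orbit n = x0"
proof -
  have "G = {(s ^^ k) (s x0) | k. k < n}"
    using translation x0_in s_in unfolding translation_def by blast
  then obtain k where "k < n" and "x0 = (s ^^ k) (s x0)"
    using x0_in by blast
  then have k: "k < n" "orbit 0 = orbit (Suc k)"
    by (simp_all add: orbit_def funpow_swap1)
  have "Suc k = n"
  proof (rule ccontr)
    assume "Suc k \<noteq> n"
    with k have "0 = Suc k" using inj_orbit card_pos by (auto dest: inj_onD)
    then show False by simp
  qed
  with k show ?thesis by (simp add: orbit_def)
qed

lemma orbit_add_mult: "orbit (k + n * q) = orbit k"
proof (induction q)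
  case (Suc q)
  have "orbit (k + n * Suc q) = (s ^^ (k + n * q)) (orbit n)"
    by (simp add: funpow_orbit algebra_simps)
  also have "\<dots> = orbit (k + n * q)"
    by (simp add: orbit_period) (simp add: orbit_def)
  finally show ?case using Suc by simp
qed simp

lemma orbit_mod: "orbit (k mod n) = orbit k"
  using orbit_add_mult[of "k mod n" "k div n"] by simp

lemma orbit_eq_iff: "orbit a = orbit b \<longleftrightarrow> a mod n = b mod n"
proof
  assume "orbit a = orbit b"
  then have "orbit (a mod n) = orbit (b mod n)" by (simp add: orbit_mod)
  then show "a mod n = b mod n" using inj_orbit card_pos by (auto dest: inj_onD)
qed (metis orbit_mod)

definition index :: "'a \<Rightarrow> nat" where "index y = inv_into {..<n} orbit y"

lemma index_lt: "y \<in> G \<Longrightarrow> index y < n"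
  unfolding index_def using G_eq_orbit inv_into_into by (metis lessThan_iff)

lemma orbit_index: "y \<in> G \<Longrightarrow> orbit (index y) = y"
  unfolding index_def using G_eq_orbit f_inv_into_f by metis

lemma index_s: "x \<in> G \<Longrightarrow> index (s x) mod n = Suc (index x) mod n"
  by (simp add: orbit_eq_iff[symmetric] orbit_index s_in orbit_Suc)

(* For odd n, the mean (x + y)/2 in Z/n, transported to G. *)
definition mean :: "'a \<Rightarrow> 'a \<Rightarrow> 'a" where
  "mean x y = orbit ((n + 1) div 2 * (index x + index y))"

lemma mean_quasigroup:
  assumes "odd n"
  shows "quasigroup_op G mean"
  unfolding quasigroup_op_def
proof (intro conjI ballI impI)
  fix x y show "mean x y \<in> G" by (simp add: mean_def orbit_in)
next
  fix x y z assume xyz: "x \<in> G" "y \<in> G" "z \<in> G" and "mean x y = mean x z"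
  then have "(index x + index y) mod n = (index x + index z) mod n"
    by (auto simp: mean_def orbit_eq_iff intro: half_mod_cancel[OF assms])
  then have "orbit (index y) = orbit (index z)" by (simp add: orbit_eq_iff nat_mod_eq_iff)
  with xyz show "y = z" by (simp add: orbit_index)
next
  fix x y z assume xyz: "x \<in> G" "y \<in> G" "z \<in> G" and "mean y x = mean z x"
  then have "(index y + index x) mod n = (index z + index x) mod n"
    by (auto simp: mean_def orbit_eq_iff intro: half_mod_cancel[OF assms])
  then have "orbit (index y) = orbit (index z)" by (simp add: orbit_eq_iff nat_mod_eq_iff)
  with xyz show "y = z" by (simp add: orbit_index)
qed

(* Adding 1 to both arguments adds 2h = n + 1, i.e. 1, to the mean. *)
lemma s_mean:
  assumes "odd n" and "x \<in> G" and "y \<in> G"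
  shows "s (mean x y) = mean (s x) (s y)"
proof -
  define h where "h = (n + 1) div 2"
  have two_h: "2 * h = n + 1" using assms(1) by (simp add: h_def)
  have "(index (s x) + index (s y)) mod n = (Suc (index x) + Suc (index y)) mod n"
    using index_s assms(2,3) by (metis mod_add_cong)
  then have "(h * (index (s x) + index (s y))) mod n = (h * (Suc (index x) + Suc (index y))) mod n"
    by (metis mod_mult_right_eq)
  also have "h * (Suc (index x) + Suc (index y)) = Suc (h * (index x + index y)) + n"
    using two_h by (simp add: algebra_simps)
  finally have "(h * (index (s x) + index (s y))) mod n = Suc (h * (index x + index y)) mod n"
    by (simp only: mod_add_self2)
  then show ?thesis
    unfolding mean_def h_def[symmetric] orbit_Suc[symmetric] orbit_eq_iff by simp
qed

(* If s is an automorphism of a quasigroup operation f on G, then n is odd: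
   c d = index (x0 * orbit d) is an orthomorphism of Z/n. *)
lemma automorphic_quasigroup_odd:
  assumes quasigroup: "quasigroup_op G f"
    and automorphism: "\<forall>x\<in>G. \<forall>y\<in>G. s (f x y) = f (s x) (s y)"
  shows "odd n"
proof -
  have closed: "\<forall>x\<in>G. \<forall>y\<in>G. f x y \<in> G"
    and left_cancel: "\<And>x y z. x \<in> G \<Longrightarrow> y \<in> G \<Longrightarrow> z \<in> G \<Longrightarrow> f x y = f x z \<Longrightarrow> y = z"
    and right_cancel: "\<And>x y z. x \<in> G \<Longrightarrow> y \<in> G \<Longrightarrow> z \<in> G \<Longrightarrow> f y x = f z x \<Longrightarrow> y = z"
    using quasigroup unfolding quasigroup_op_def by blast+
  define c where "c d = index (f x0 (orbit d))" for d
  have c_lt: "c d < n" and orbit_c: "orbit (c d) = f x0 (orbit d)" for d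
    unfolding c_def using index_lt orbit_index closed x0_in orbit_in by auto
  have c_inj: "inj_on c {..<n}"
  proof (rule inj_onI)
    fix a b assume "a \<in> {..<n}" "b \<in> {..<n}" "c a = c b"
    then have "orbit a = orbit b" using orbit_c left_cancel x0_in orbit_in by metis
    with \<open>a \<in> {..<n}\<close> \<open>b \<in> {..<n}\<close> show "a = b" using inj_orbit by (auto dest: inj_onD)
  qed
  have right_mult_x0: "f (orbit (n - d)) x0 = orbit (n - d + c d)" if "d < n" for d
  proof -
    have "orbit (n - d + c d) = (s ^^ (n - d)) (f x0 (orbit d))"
      by (simp add: funpow_orbit flip: orbit_c)
    also have "\<dots> = f (orbit (n - d)) (orbit n)"
      using funpow_automorphism[OF _ closed automorphism x0_in orbit_in] s_in that
      by (simp add: funpow_orbit orbit_def[of "n - d"])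
    finally show ?thesis by (simp add: orbit_period)
  qed
  have diff_inj: "inj_on (\<lambda>d. (n - d + c d) mod n) {..<n}"
  proof (rule inj_onI)
    fix a b assume ab: "a \<in> {..<n}" "b \<in> {..<n}" "(n - a + c a) mod n = (n - b + c b) mod n"
    then have "f (orbit (n - a)) x0 = f (orbit (n - b)) x0"
      by (simp add: right_mult_x0 orbit_eq_iff)
    then have "(n - a) mod n = (n - b) mod n"
      using right_cancel x0_in orbit_in by (metis orbit_eq_iff)
    with ab show "a = b" by (cases "a = 0"; cases "b = 0") auto
  qed
  show ?thesis
    using orthomorphism_odd[OF card_pos c_inj _ diff_inj] c_lt by blast
qed

end

theorem lemma2p1:
  fixes G :: "'a set" and s :: "'a \<Rightarrow> 'a"
  assumes "finite G" and "card G \<ge> 1" and "translation G s"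
  shows "(\<exists>f. quasigroup_op G f \<and> (\<forall>x\<in>G. \<forall>y\<in>G. s (f x y) = f (s x) (s y)))
         \<longleftrightarrow> odd (card G)"
proof -
  obtain x0 where "x0 \<in> G" using assms(2) by fastforce
  then interpret translation_orbit G s x0 using assms by unfold_locales
  show ?thesis using automorphic_quasigroup_odd mean_quasigroup s_mean by blast
qed

end
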